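(* Let $m,n\ge4$, let $\omega$ be a weight order on $\mathbb{K}[y_S]$ and let $F$ be a Gröbner basis of $I_{P_n}$ with respect to $\omega$. If every element of $F$ is weakly $Q_{m,n}$-homogeneous with respect to $\omega$, then for every binomial in $F$ of the form $y_{\emptyset}y_{S_2}\cdots y_{S_k}-y_{T_1}y_{T_2}\cdots y_{T_k}$ with $T_i\neq\emptyset$ for all $i$, it holds that $y_{T_1}y_{T_2}\cdots y_{T_k}\le_\omega y_\emptyset y_{S_2}\cdots y_{S_k}$.
   Context: A DAG's v-structure is $i\to k\leftarrow j$ with $i,j$ non-adjacent; Markov equivalence classes of DAGs with a given skeleton are determined by their v-structures, and for an undirected graph $G$ the characteristic imset ideal $I_G$ is the kernel of the map sending the variable of a class to $\prod_{S:c(S)=1}t_S$, where $c(S)=1$ iff some $i\in S$ has $S\setminus\{i\}\subseteq\mathrm{pa}(i)$ in a DAG of the class. $P_n$ is the path $1-2-\cdots-n$; its classes are indexed by collider sets $S\subseteq\{2,\dots,n-1\}$ with no two consecutive integers, giving variables $y_S$. With $N=n+m-4$, $P'_m$ is the path $n-1,n,\dots,N,1,2$; its classes are indexed by sets $S'$ of interior vertices (among $n,\dots,N,1$) with no two consecutive along the path. $Q_{m,n}$ is the set of pairs $(S',S)$ of such collider sets with no two elements of $S'\cup S$ cyclically consecutive modulo $N$ and $S'\cup S\ne\emptyset$. A polynomial $f\in\mathbb{K}[y_S]$ homogeneous of degree $d$ with $\omega$-leading monomial $y_{S_1}\cdots y_{S_d}$ is weakly $Q_{m,n}$-homogeneous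 w.r.t. $\omega$ if for every monomial $y_{T_1}\cdots y_{T_d}$ of $f$ there is a permutation $\sigma$ of $[d]$ with $\{(S'_1,\dots,S'_d):(S'_\ell,S_\ell)\in Q_{m,n}\ \forall\ell\}\subseteq\{(S'_1,\dots,S'_d):(S'_\ell,T_{\sigma(\ell)})\in Q_{m,n}\ \forall\ell\}$. *)

theory Defs
  imports Complex_Main "HOL-Library.Multiset" "HOL-Library.Poly_Mapping"
begin

definition path_edges :: "nat \<Rightarrow> (nat \<times> nat) set" where
  "path_edges n = {(i, Suc i) | i. 1 \<le> i \<and> i < n} \<union> {(Suc i, i) | i. 1 \<le> i \<and> i < n}"

definition path_dag :: "nat \<Rightarrow> (nat \<times> nat) set \<Rightarrow> bool" where
  "path_dag n D \<longleftrightarrow> D \<union> D\<inverse> = path_edges n \<and> D \<inter> D\<inverse> = {} \<and> acyclic D"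

definition parents :: "(nat \<times> nat) set \<Rightarrow> nat \<Rightarrow> nat set" where
  "parents D i = {j. (j, i) \<in> D}"

definition vstruct_colliders :: "(nat \<times> nat) set \<Rightarrow> nat set" where
  "vstruct_colliders D = {k. \<exists>i j. (i, k) \<in> D \<and> (j, k) \<in> D \<and> i \<noteq> j \<and> (i, j) \<notin> D \<and> (j, i) \<notin> D}"

text \<open>Index set of classes of P_n: collider sets in {2..n-1} with no two consecutive.\<close>
definition Pn_var :: "nat \<Rightarrow> nat set \<Rightarrow> bool" where
  "Pn_var n S \<longleftrightarrow> S \<subseteq> {2..n-1} \<and> (\<forall>i\<in>S. Suc i \<notin> S)"

definition Pn_class :: "nat \<Rightarrow> nat set \<Rightarrow> (nat \<times> nat) set set" where
  "Pn_class n S = {D. path_dag n D \<and> vstruct_colliders D = S}"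

text \<open>Sets T of vertices with c(T) = 1 for the class S.\<close>
definition charset :: "nat \<Rightarrow> nat set \<Rightarrow> nat set set" where
  "charset n S = {T. T \<subseteq> {1..n} \<and>
     (\<exists>D\<in>Pn_class n S. \<exists>i\<in>T. T - {i} \<subseteq> parents D i)}"

text \<open>Monomials in variables indexed by sets are multisets of sets; polynomials
  are finitely supported maps from monomials to coefficients.\<close>
type_synonym mono = "nat set multiset"
type_synonym 'k poly_ring = "mono \<Rightarrow>\<^sub>0 'k"

text \<open>Image of the monomial y^a under y_S |-> prod_{T : c_S(T)=1} t_T.\<close>
definition img_mono :: "nat \<Rightarrow> mono \<Rightarrow> mono" where
  "img_mono n a = (\<Sum>S\<in>#a. mset_set (charset n S))"

definition img_poly :: "nat \<Rightarrow> 'k::comm_ring_1 poly_ring \<Rightarrow> 'k poly_ring" where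
  "img_poly n f = (\<Sum>a\<in>Poly_Mapping.keys f. Poly_Mapping.single (img_mono n a) (Poly_Mapping.lookup f a))"

definition IPn :: "nat \<Rightarrow> 'k::comm_ring_1 poly_ring set" where
  "IPn n = {f. (\<forall>a\<in>Poly_Mapping.keys f. \<forall>S\<in>#a. Pn_var n S) \<and> img_poly n f = 0}"

definition term_order :: "nat set set \<Rightarrow> (mono \<Rightarrow> mono \<Rightarrow> bool) \<Rightarrow> bool" where
  "term_order V tau \<longleftrightarrow>
     (let M = {a. set_mset a \<subseteq> V} in
       (\<forall>a\<in>M. tau a a) \<and>
       (\<forall>a\<in>M. \<forall>b\<in>M. tau a b \<and> tau b a \<longrightarrow> a = b) \<and>
       (\<forall>a\<in>M. \<forall>b\<in>M. \<forall>c\<in>M. tau a b \<and> tau b c \<longrightarrow> tau a c) \<and>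
       (\<forall>a\<in>M. \<forall>b\<in>M. tau a b \<or> tau b a) \<and>
       (\<forall>a\<in>M. tau {#} a) \<and>
       (\<forall>a\<in>M. \<forall>b\<in>M. \<forall>c\<in>M. tau a b \<longrightarrow> tau (a + c) (b + c)))"

definition weight :: "(nat set \<Rightarrow> real) \<Rightarrow> mono \<Rightarrow> real" where
  "weight w a = (\<Sum>S\<in>#a. w S)"

definition weight_le :: "(nat set \<Rightarrow> real) \<Rightarrow> (mono \<Rightarrow> mono \<Rightarrow> bool) \<Rightarrow> mono \<Rightarrow> mono \<Rightarrow> bool" where
  "weight_le w tau a b \<longleftrightarrow> weight w a < weight w b \<or> (weight w a = weight w b \<and> tau a b)"

definition lead_mono :: "(mono \<Rightarrow> mono \<Rightarrow> bool) \<Rightarrow> 'k::zero poly_ring \<Rightarrow> mono" where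
  "lead_mono le f = (THE a. a \<in> Poly_Mapping.keys f \<and> (\<forall>b\<in>Poly_Mapping.keys f. le b a))"

definition groebner_basis ::
  "(mono \<Rightarrow> mono \<Rightarrow> bool) \<Rightarrow> 'k::zero poly_ring set \<Rightarrow> 'k poly_ring set \<Rightarrow> bool" where
  "groebner_basis le I F \<longleftrightarrow> finite F \<and> F \<subseteq> I \<and>
     (\<forall>f\<in>I. f \<noteq> 0 \<longrightarrow> (\<exists>g\<in>F. g \<noteq> 0 \<and> lead_mono le g \<subseteq># lead_mono le f))"

text \<open>Interior vertices of P'_m (path n-1, n, ..., N, 1, 2 with N = n+m-4):
  n..N and 1; consecutive along the path: (k,k+1) for n <= k < N, and (N,1).
  Cyclic consecutiveness mod N on {1..N}: y = (x mod N) + 1.\<close>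
definition Qmn :: "nat \<Rightarrow> nat \<Rightarrow> (nat set \<times> nat set) set" where
  "Qmn m n = (let N = n + m - 4 in
     {(S', S). S' \<subseteq> {n..N} \<union> {1} \<and> Pn_var n S \<and>
        (\<forall>x\<in>S' \<union> S. \<forall>y\<in>S' \<union> S. y \<noteq> x mod N + 1) \<and> S' \<union> S \<noteq> {}})"

definition homogeneous :: "nat \<Rightarrow> 'k::zero poly_ring \<Rightarrow> bool" where
  "homogeneous d f \<longleftrightarrow> (\<forall>a\<in>Poly_Mapping.keys f. size a = d)"

definition weakly_Q_hom ::
  "nat \<Rightarrow> nat \<Rightarrow> (mono \<Rightarrow> mono \<Rightarrow> bool) \<Rightarrow> 'k::zero poly_ring \<Rightarrow> bool" where
  "weakly_Q_hom m n le f \<longleftrightarrow> (\<exists>d. homogeneous d f \<and>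
     (\<forall>Ss. mset Ss = lead_mono le f \<longrightarrow>
        (\<forall>b\<in>Poly_Mapping.keys f. \<exists>Ts. mset Ts = b \<and>
           {S's. length S's = d \<and> (\<forall>l<d. (S's ! l, Ss ! l) \<in> Qmn m n)}
           \<subseteq> {S's. length S's = d \<and> (\<forall>l<d. (S's ! l, Ts ! l) \<in> Qmn m n)})))"

end

theory Submission
  imports Defs
begin

text \<open>Suppose the binomial \<open>y\<^sup>A - y\<^sup>B\<close> had leading monomial \<open>y\<^sup>B\<close>. Since every factor
  \<open>T\<close> of \<open>y\<^sup>B\<close> is nonempty, \<open>(\<emptyset>, T) \<in> Q\<^sub>m\<^sub>,\<^sub>n\<close>, so the tuple \<open>(\<emptyset>, \<dots>, \<emptyset>)\<close> is
  compatible with \<open>y\<^sup>B\<close>. Weak \<open>Q\<^sub>m\<^sub>,\<^sub>n\<close>-homogeneity makes it compatible with \<open>y\<^sup>A\<close> in some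
  order, which is impossible because \<open>y\<^sup>A\<close> has the factor \<open>y\<^sub>\<emptyset>\<close> and \<open>(\<emptyset>, \<emptyset>) \<notin> Q\<^sub>m\<^sub>,\<^sub>n\<close>.\<close>

lemma empty_Qmn_iff:
  assumes "m \<ge> 4" and "Pn_var n S"
  shows "({}, S) \<in> Qmn m n \<longleftrightarrow> S \<noteq> {}"
proof -
  have "y \<noteq> x mod (n + m - 4) + 1" if "x \<in> S" and "y \<in> S" for x y
  proof -
    have "2 \<le> x" "x \<le> n - 1" "Suc x \<notin> S" using assms(2) \<open>x \<in> S\<close> unfolding Pn_var_def by auto
    moreover from \<open>2 \<le> x\<close> \<open>x \<le> n - 1\<close> assms(1) have "x < n + m - 4" by linarith
    ultimately show ?thesis using \<open>y \<in> S\<close> by auto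
  qed
  then show ?thesis using assms(2) unfolding Qmn_def Let_def by auto
qed

lemma keys_binomial:
  assumes "A \<noteq> B"
  shows "Poly_Mapping.keys (Poly_Mapping.single A (1::'k::ring_1) - Poly_Mapping.single B 1) = {A, B}"
  using assms by (auto simp: in_keys_iff lookup_minus lookup_single when_def split: if_splits)

lemma lead_mono_two_keys:
  assumes "Poly_Mapping.keys f = {A, B}" and "le A B" and "le B B" and "\<not> le B A"
  shows "lead_mono le f = B"
  unfolding lead_mono_def assms(1)
  by (rule the_equality) (use assms(2-4) in auto)

lemma weight_le_total:
  assumes "term_order V tau" and "set_mset a \<subseteq> V" and "set_mset b \<subseteq> V"
  shows "weight_le w tau a b \<or> weight_le w tau b a"
proof -
  have "tau a b \<or> tau b a" using assms unfolding term_order_def Let_def by blast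
  then show ?thesis unfolding weight_le_def by auto
qed

lemma weight_le_refl:
  assumes "term_order V tau" and "set_mset a \<subseteq> V"
  shows "weight_le w tau a a"
proof -
  have "tau a a" using assms unfolding term_order_def Let_def by blast
  then show ?thesis unfolding weight_le_def by simp
qed

lemma weakly_Q_hom_keys_avoid_empty:
  assumes "m \<ge> 4" and "weakly_Q_hom m n le f"
    and lead: "lead_mono le f \<in> Poly_Mapping.keys f"
    and lead_factors: "\<forall>S\<in>#lead_mono le f. Pn_var n S \<and> S \<noteq> {}"
    and b: "b \<in> Poly_Mapping.keys f"
  shows "{} \<notin># b"
proof -
  obtain d where hom: "homogeneous d f" and compat: "\<forall>Ss. mset Ss = lead_mono le f \<longrightarrow>
      (\<forall>b\<in>Poly_Mapping.keys f. \<exists>Ts. mset Ts = b \<and>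
         {S's. length S's = d \<and> (\<forall>l<d. (S's ! l, Ss ! l) \<in> Qmn m n)}
         \<subseteq> {S's. length S's = d \<and> (\<forall>l<d. (S's ! l, Ts ! l) \<in> Qmn m n)})"
    using assms(2) unfolding weakly_Q_hom_def by blast
  obtain Ss where Ss: "mset Ss = lead_mono le f" using ex_mset by blast
  then obtain Ts where Ts: "mset Ts = b" and sub:
      "{S's. length S's = d \<and> (\<forall>l<d. (S's ! l, Ss ! l) \<in> Qmn m n)}
       \<subseteq> {S's. length S's = d \<and> (\<forall>l<d. (S's ! l, Ts ! l) \<in> Qmn m n)}"
    using compat b by blast
  have "length Ss = d" using hom lead Ss unfolding homogeneous_def by (metis size_mset)
  have "length Ts = d" using hom b Ts unfolding homogeneous_def by (metis size_mset)
  have "({}, Ss ! l) \<in> Qmn m n" if "l < d" for l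
  proof -
    have "Ss ! l \<in># lead_mono le f" using Ss \<open>length Ss = d\<close> \<open>l < d\<close> by (metis nth_mem set_mset_mset)
    then show ?thesis using empty_Qmn_iff[OF assms(1)] lead_factors by blast
  qed
  then have "replicate d {} \<in> {S's. length S's = d \<and> (\<forall>l<d. (S's ! l, Ss ! l) \<in> Qmn m n)}"
    by simp
  then have "replicate d {} \<in> {S's. length S's = d \<and> (\<forall>l<d. (S's ! l, Ts ! l) \<in> Qmn m n)}"
    using sub by blast
  moreover have "({}, {}) \<notin> Qmn m n" unfolding Qmn_def Let_def by simp
  ultimately have "Ts ! l \<noteq> {}" if "l < d" for l
    using that by force
  then show ?thesis using Ts \<open>length Ts = d\<close> by (metis in_set_conv_nth set_mset_mset)
qed

theorem lemma5p2:
  fixes m n :: nat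
    and w :: "nat set \<Rightarrow> real"
    and tau :: "mono \<Rightarrow> mono \<Rightarrow> bool"
    and F :: "'k::field poly_ring set"
  assumes "m \<ge> 4" and "n \<ge> 4"
    and "term_order {S. Pn_var n S} tau"
    and "groebner_basis (weight_le w tau) (IPn n) F"
    and "\<forall>f\<in>F. weakly_Q_hom m n (weight_le w tau) f"
  shows "\<forall>g\<in>F. \<forall>A B. g = Poly_Mapping.single A 1 - Poly_Mapping.single B 1 \<and>
            {} \<in># A \<and> size A = size B \<and> (\<forall>T\<in>#B. T \<noteq> {})
          \<longrightarrow> weight_le w tau B A"
proof (intro ballI allI impI, elim conjE)
  fix g A B
  assume "g \<in> F" and g: "g = Poly_Mapping.single A 1 - Poly_Mapping.single B 1"
    and "{} \<in># A" and B_nonempty: "\<forall>T\<in>#B. T \<noteq> {}"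
  then have "A \<noteq> B" by auto
  then have keys: "Poly_Mapping.keys g = {A, B}" unfolding g by (rule keys_binomial)
  have "g \<in> IPn n" using assms(4) \<open>g \<in> F\<close> unfolding groebner_basis_def by blast
  then have A: "set_mset A \<subseteq> {S. Pn_var n S}" and B: "set_mset B \<subseteq> {S. Pn_var n S}"
    using keys unfolding IPn_def by auto
  show "weight_le w tau B A"
  proof (rule ccontr)
    assume "\<not> weight_le w tau B A"
    then have "weight_le w tau A B" using weight_le_total[OF assms(3) A B] by blast
    then have lead: "lead_mono (weight_le w tau) g = B"
      using lead_mono_two_keys[OF keys] weight_le_refl[OF assms(3) B] \<open>\<not> weight_le w tau B A\<close>
      by blast
    have "{} \<notin># A"
    proof (rule weakly_Q_hom_keys_avoid_empty[OF assms(1)])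
      show "weakly_Q_hom m n (weight_le w tau) g" using assms(5) \<open>g \<in> F\<close> by blast
      show "\<forall>S\<in>#lead_mono (weight_le w tau) g. Pn_var n S \<and> S \<noteq> {}"
        using lead B B_nonempty by auto
    qed (use lead keys in auto)
    with \<open>{} \<in># A\<close> show False by contradiction
  qed
qed

end
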